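(* Consider one seller with one item and $n$ ex-post rational buyers $N=\{1,\dots,n\}$; the item's quality $q\in Q=[q_1,q_2]$ has density $g$ and is observed only by the seller; buyer $i$'s valuation $v_i(q)$ is monotone increasing in $q$ with inverse $v_i^{-1}$. A fixed-price signaling mechanism is a pair $(\pi,p)$ where, for each $q$, $\pi(q,\cdot)$ is a probability distribution over the signals $s_0,s_1,\dots,s_n$ ($\pi(q,s_i)\ge0$, $\sum_{i\in N}\pi(q,s_i)+\pi(q,s_0)=1$); signal $s_i$ means buyer $i$ receives "1" (buy) and all others receive "0", and $s_0$ means all buyers receive "0". Then $(\pi,p)$ is obedient for all buyers (each ex-post rational buyer, after Bayesian updating on his own received signal, is almost surely willing to buy after receiving 1 and almost surely unwilling after receiving 0) if and only if for all $i\in N$: $\int_{q_1}^{v_i^{-1}(p)}\pi(q,s_i)g(q)\,\mathrm{d}q=0$ and $\int_{v_i^{-1}(p)}^{q_2}[1-\pi(q,s_i)]g(q)\,\mathrm{d}q=0$.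
   Context: An ex-post rational buyer $i$ is willing to buy iff $v_i(q)\ge p$. Upon receiving 1, buyer $i$'s posterior density is $\pi(q,s_i)g(q)/\int_Q\pi(q',s_i)g(q')\,\mathrm{d}q'$; upon receiving 0 it is $[1-\pi(q,s_i)]g(q)/\int_Q[1-\pi(q',s_i)]g(q')\,\mathrm{d}q'$. *)

theory Defs
  imports "HOL-Analysis.Analysis"
begin

text \<open>Signals are indexed by naturals: signal 0 is s_0 (everybody receives 0),
  signal i (1 <= i <= n) is s_i (buyer i receives 1, all others 0).
  sig q j is the probability of signal j when the quality is q.\<close>

definition post_one :: "real set \<Rightarrow> (real \<Rightarrow> real) \<Rightarrow> (real \<Rightarrow> nat \<Rightarrow> real) \<Rightarrow> nat \<Rightarrow> real \<Rightarrow> real" where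
  "post_one Q g sig i q = sig q i * g q / (LINT q':Q|lborel. sig q' i * g q')"

definition post_zero :: "real set \<Rightarrow> (real \<Rightarrow> real) \<Rightarrow> (real \<Rightarrow> nat \<Rightarrow> real) \<Rightarrow> nat \<Rightarrow> real \<Rightarrow> real" where
  "post_zero Q g sig i q = (1 - sig q i) * g q / (LINT q':Q|lborel. (1 - sig q' i) * g q')"

text \<open>Obedience: an ex-post rational buyer i (willing iff v i q >= p) is almost surely
  willing after receiving 1 (posterior probability of being unwilling is 0) and almost surely
  unwilling after receiving 0 (posterior probability of being willing is 0).\<close>
definition obedient :: "nat \<Rightarrow> real set \<Rightarrow> (real \<Rightarrow> real) \<Rightarrow> (nat \<Rightarrow> real \<Rightarrow> real)
    \<Rightarrow> (real \<Rightarrow> nat \<Rightarrow> real) \<Rightarrow> real \<Rightarrow> bool" where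
  "obedient n Q g v sig p \<longleftrightarrow>
     (\<forall>i\<in>{1..n}.
        (LINT q:{q\<in>Q. v i q < p}|lborel. post_one Q g sig i q) = 0 \<and>
        (LINT q:{q\<in>Q. v i q \<ge> p}|lborel. post_zero Q g sig i q) = 0)"

end

theory Submission
  imports Defs
begin

text \<open>Since the posterior densities are the prior weights divided by a normalising constant,
  a posterior event has probability zero exactly when its unnormalised weight vanishes; this
  also holds when the constant itself is zero, because then every sub-integral is zero and the
  division yields the junk value 0. By strict monotonicity of the valuation, the events
  \<open>v\<^sub>i(q) < p\<close> and \<open>v\<^sub>i(q) \<ge> p\<close> are the intervals \<open>[q\<^sub>1, t)\<close> and \<open>[t, q\<^sub>2]\<close> with
  \<open>t = v\<^sub>i\<^sup>-\<^sup>1(p)\<close>, and the single point \<open>t\<close> is Lebesgue-null.\<close>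

lemma set_integral_nonneg_mono_set:
  fixes h :: "'a \<Rightarrow> real"
  assumes h_int: "set_integrable M B h" and h_nonneg: "\<And>x. x \<in> B \<Longrightarrow> 0 \<le> h x"
    and A_sub: "A \<subseteq> B" and A_sets: "A \<in> sets M" and B_sets: "B \<in> sets M"
  shows "0 \<le> (LINT x:A|M. h x)" and "(LINT x:A|M. h x) \<le> (LINT x:B|M. h x)"
proof -
  have nonneg: "0 \<le> (LINT x:C|M. h x)" if "C \<subseteq> B" for C
    unfolding set_lebesgue_integral_def
    by (rule Bochner_Integration.integral_nonneg) (use that h_nonneg in \<open>auto split: split_indicator\<close>)
  have "(LINT x:B|M. h x) = (LINT x:A \<union> (B - A)|M. h x)"
    using A_sub by (simp add: Un_absorb1)
  also have "\<dots> = (LINT x:A|M. h x) + (LINT x:B - A|M. h x)"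
    by (rule set_integral_Un)
       (use set_integrable_subset[OF h_int] A_sub A_sets B_sets in auto)
  finally show "(LINT x:A|M. h x) \<le> (LINT x:B|M. h x)"
    using nonneg[of "B - A"] by simp
  show "0 \<le> (LINT x:A|M. h x)" using nonneg A_sub by simp
qed

lemma set_integral_normalized_eq_0_iff:
  fixes h :: "'a \<Rightarrow> real"
  assumes "set_integrable M B h" "\<And>x. x \<in> B \<Longrightarrow> 0 \<le> h x"
    and "A \<subseteq> B" "A \<in> sets M" "B \<in> sets M"
  shows "(LINT x:A|M. h x / (LINT y:B|M. h y)) = 0 \<longleftrightarrow> (LINT x:A|M. h x) = 0"
  using set_integral_nonneg_mono_set[OF assms] by auto

lemma set_integrable_bounded_mult:
  fixes g w :: "'a \<Rightarrow> real"
  assumes g_int: "set_integrable M A g" and w_meas: "w \<in> borel_measurable M"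
    and w_bound: "\<And>x. x \<in> A \<Longrightarrow> \<bar>w x\<bar> \<le> C"
  shows "set_integrable M A (\<lambda>x. w x * g x)"
proof (rule set_integrable_bound)
  show "set_integrable M A (\<lambda>x. C * g x)" using g_int by simp
  have "(\<lambda>x. indicator A x * g x) \<in> borel_measurable M"
    using g_int unfolding set_integrable_def by (simp add: borel_measurable_integrable)
  then have "(\<lambda>x. w x * (indicator A x * g x)) \<in> borel_measurable M"
    using w_meas by measurable
  then show "set_borel_measurable M A (\<lambda>x. w x * g x)"
    unfolding set_borel_measurable_def by (simp add: mult_ac)
  show "AE x in M. x \<in> A \<longrightarrow> norm (w x * g x) \<le> norm (C * g x)"
  proof (rule AE_I2, rule impI)
    fix x assume "x \<in> A"
    then have "\<bar>w x\<bar> * \<bar>g x\<bar> \<le> \<bar>C\<bar> * \<bar>g x\<bar>"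
      using w_bound by (intro mult_right_mono) fastforce+
    then show "norm (w x * g x) \<le> norm (C * g x)" by (simp add: abs_mult)
  qed
qed

lemma set_integral_Icc_eq_Ico:
  fixes f :: "real \<Rightarrow> real"
  assumes "set_borel_measurable lborel {a..b} f"
  shows "(LINT x:{a..b}|lborel. f x) = (LINT x:{a..<b}|lborel. f x)"
proof (rule set_integral_cong_set)
  show "set_borel_measurable lborel {a..<b} f"
    by (rule set_borel_measurable_subset[OF assms]) auto
  show "AE x in lborel. x \<in> {a..<b} \<longleftrightarrow> x \<in> {a..b}"
    using AE_lborel_singleton[of b] by eventually_elim auto
qed (fact assms)

lemma strict_mono_on_Icc_level_sets:
  fixes f :: "real \<Rightarrow> 'b::linorder"
  assumes mono: "strict_mono_on {a..b} f" and p: "p \<in> f ` {a..b}"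
  defines "t \<equiv> the_inv_into {a..b} f p"
  shows "t \<in> {a..b}"
    and "{x \<in> {a..b}. f x < p} = {a..<t}"
    and "{x \<in> {a..b}. p \<le> f x} = {t..b}"
proof -
  have inj: "inj_on f {a..b}" using mono strict_mono_on_imp_inj_on by blast
  show t: "t \<in> {a..b}" unfolding t_def using the_inv_into_into[OF inj p subset_refl] .
  have ft: "f t = p" unfolding t_def using f_the_inv_into_f[OF inj p] .
  have less_iff: "f x < p \<longleftrightarrow> x < t" if "x \<in> {a..b}" for x
    using strict_mono_on_less[OF mono that t] ft by simp
  show "{x \<in> {a..b}. f x < p} = {a..<t}" using less_iff t by auto
  show "{x \<in> {a..b}. p \<le> f x} = {t..b}" using less_iff t by (auto simp: not_less[symmetric])
qed

lemma obedience_of_one_buyer_iff: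
  fixes g w :: "real \<Rightarrow> real" and f :: "real \<Rightarrow> 'b::linorder"
  assumes mono: "strict_mono_on {a..b} f" and p: "p \<in> f ` {a..b}"
    and g_int: "set_integrable lborel {a..b} g" and g_nonneg: "\<And>x. x \<in> {a..b} \<Longrightarrow> 0 \<le> g x"
    and w_meas: "w \<in> borel_measurable lborel"
    and w_range: "\<And>x. x \<in> {a..b} \<Longrightarrow> w x \<in> {0..1}"
  defines "t \<equiv> the_inv_into {a..b} f p"
  shows "(LINT x:{x \<in> {a..b}. f x < p}|lborel. w x * g x / (LINT y:{a..b}|lborel. w y * g y)) = 0
           \<longleftrightarrow> (LINT x:{a..t}|lborel. w x * g x) = 0"
    and "(LINT x:{x \<in> {a..b}. p \<le> f x}|lborel.
            (1 - w x) * g x / (LINT y:{a..b}|lborel. (1 - w y) * g y)) = 0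
           \<longleftrightarrow> (LINT x:{t..b}|lborel. (1 - w x) * g x) = 0"
proof -
  note level_sets = strict_mono_on_Icc_level_sets[OF mono p, folded t_def]
  have one_int: "set_integrable lborel {a..b} (\<lambda>x. w x * g x)"
    by (rule set_integrable_bounded_mult[OF g_int w_meas, where C = 1]) (use w_range in auto)
  have zero_int: "set_integrable lborel {a..b} (\<lambda>x. (1 - w x) * g x)"
    by (rule set_integrable_bounded_mult[OF g_int _, where C = 1]) (use w_meas w_range in auto)
  have "set_borel_measurable lborel {a..b} (\<lambda>x. w x * g x)"
    using one_int unfolding set_integrable_def set_borel_measurable_def
    by (rule borel_measurable_integrable)
  then have "set_borel_measurable lborel {a..t} (\<lambda>x. w x * g x)"
    by (rule set_borel_measurable_subset) (use level_sets(1) in auto)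
  then have "(LINT x:{a..t}|lborel. w x * g x) = (LINT x:{a..<t}|lborel. w x * g x)"
    by (rule set_integral_Icc_eq_Ico)
  then show "(LINT x:{x \<in> {a..b}. f x < p}|lborel. w x * g x / (LINT y:{a..b}|lborel. w y * g y)) = 0
           \<longleftrightarrow> (LINT x:{a..t}|lborel. w x * g x) = 0"
    unfolding level_sets(2)
    by (subst set_integral_normalized_eq_0_iff[OF one_int])
       (use w_range g_nonneg level_sets(1) in auto)
  show "(LINT x:{x \<in> {a..b}. p \<le> f x}|lborel.
            (1 - w x) * g x / (LINT y:{a..b}|lborel. (1 - w y) * g y)) = 0
           \<longleftrightarrow> (LINT x:{t..b}|lborel. (1 - w x) * g x) = 0"
    unfolding level_sets(3)
    by (rule set_integral_normalized_eq_0_iff[OF zero_int])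
       (use w_range g_nonneg level_sets(1) in auto)
qed

theorem mainTheorem7:
  fixes n :: nat and q1 q2 p :: real and g :: "real \<Rightarrow> real"
    and v :: "nat \<Rightarrow> real \<Rightarrow> real" and sig :: "real \<Rightarrow> nat \<Rightarrow> real"
  assumes "q1 < q2"
    and g_nonneg: "\<And>q. q \<in> {q1..q2} \<Longrightarrow> g q \<ge> 0"
    and g_int: "set_integrable lborel {q1..q2} g"
    and g_one: "(LINT q:{q1..q2}|lborel. g q) = 1"
    and v_mono: "\<And>i. i \<in> {1..n} \<Longrightarrow> strict_mono_on {q1..q2} (v i)"
    and p_range: "\<And>i. i \<in> {1..n} \<Longrightarrow> p \<in> v i ` {q1..q2}"
    and pi_meas: "\<And>j. j \<le> n \<Longrightarrow> (\<lambda>q. sig q j) \<in> borel_measurable lborel"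
    and pi_nonneg: "\<And>q j. q \<in> {q1..q2} \<Longrightarrow> j \<le> n \<Longrightarrow> sig q j \<ge> 0"
    and pi_sum: "\<And>q. q \<in> {q1..q2} \<Longrightarrow> (\<Sum>i\<in>{1..n}. sig q i) + sig q 0 = 1"
  shows "obedient n {q1..q2} g v sig p \<longleftrightarrow>
    (\<forall>i\<in>{1..n}.
       (LINT q:{q1..the_inv_into {q1..q2} (v i) p}|lborel. sig q i * g q) = 0 \<and>
       (LINT q:{the_inv_into {q1..q2} (v i) p..q2}|lborel. (1 - sig q i) * g q) = 0)"
proof -
  have sig_range: "sig q i \<in> {0..1}" if "i \<in> {1..n}" "q \<in> {q1..q2}" for i q
  proof -
    have "sig q i \<le> (\<Sum>j\<in>{1..n}. sig q j)"
      by (rule member_le_sum) (use that pi_nonneg in auto)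
    then show ?thesis using pi_sum[of q] pi_nonneg[of q] that by fastforce
  qed
  have sig_meas: "(\<lambda>q. sig q i) \<in> borel_measurable lborel" if "i \<in> {1..n}" for i
    using pi_meas that by simp
  show ?thesis
    unfolding obedient_def post_one_def post_zero_def
    using obedience_of_one_buyer_iff[OF v_mono p_range g_int g_nonneg sig_meas sig_range]
    by (intro ball_cong[OF refl] conj_cong) simp_all
qed

end
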